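(* Let $P$ be a finite set of points in $\mathbb{R}^2$ in general position, and let $(t,u,v)$ be consecutive vertices (in clockwise order) of the first convex layer of $P$. Let $p\neq q$ be points of $P$ with $p$ in the triangle $\triangle(t,u,v)$ and $q$ in the triangle $\triangle(t,p,v)$. Then $q\notin A(u)$.
   Context: Convex layers: $L^1$ is the set of vertices of the convex hull of $P$, and $L^k$ is the set of vertices of the convex hull of $P\setminus(L^1\cup\dots\cup L^{k-1})$. A point $p$ is active for $u\in L^1$ if, upon deleting $u$ from $P$ and recomputing the first and second convex layers, $p$ moves to the first layer; $A(u)$ is the set of points active for $u$. A point is said to be in a polygon if it lies strictly inside it. *)

theory Defs
  imports "HOL-Analysis.Analysis"
begin

type_synonym point = "real \<times> real"

text \<open>Orientation determinant: positive = counterclockwise turn, negative = clockwise turn.\<close>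
definition orient :: "point \<Rightarrow> point \<Rightarrow> point \<Rightarrow> real" where
  "orient a b c = (fst b - fst a) * (snd c - snd a) - (snd b - snd a) * (fst c - fst a)"

definition general_position :: "point set \<Rightarrow> bool" where
  "general_position P \<longleftrightarrow>
     (\<forall>a\<in>P. \<forall>b\<in>P. \<forall>c\<in>P. a \<noteq> b \<and> a \<noteq> c \<and> b \<noteq> c \<longrightarrow> orient a b c \<noteq> 0)"

definition hull_vertices :: "point set \<Rightarrow> point set" where
  "hull_vertices S = {x. x extreme_point_of (convex hull S)}"

fun remaining :: "point set \<Rightarrow> nat \<Rightarrow> point set" where
  "remaining P 0 = P"
| "remaining P (Suc k) = remaining P k - hull_vertices (remaining P k)"

text \<open>The k-th convex layer L^k (k \<ge> 1).\<close>
definition layer :: "point set \<Rightarrow> nat \<Rightarrow> point set" where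
  "layer P k = hull_vertices (remaining P (k - 1))"

text \<open>Directed edge a \<rightarrow> b of the first layer traversed clockwise:
  all other points of P lie strictly to its right.\<close>
definition cw_hull_edge :: "point set \<Rightarrow> point \<Rightarrow> point \<Rightarrow> bool" where
  "cw_hull_edge P a b \<longleftrightarrow> a \<in> layer P 1 \<and> b \<in> layer P 1 \<and> a \<noteq> b \<and>
     (\<forall>w\<in>P - {a, b}. orient a b w < 0)"

definition consecutive_cw :: "point set \<Rightarrow> point \<Rightarrow> point \<Rightarrow> point \<Rightarrow> bool" where
  "consecutive_cw P t u v \<longleftrightarrow> t \<noteq> v \<and> cw_hull_edge P t u \<and> cw_hull_edge P u v"

definition active :: "point set \<Rightarrow> point \<Rightarrow> point \<Rightarrow> bool" where
  "active P u p \<longleftrightarrow> p \<in> P - {u} \<and> p \<notin> layer P 1 \<and> p \<in> layer (P - {u}) 1"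

definition active_set :: "point set \<Rightarrow> point \<Rightarrow> point set" ("A") where
  "active_set P u = {p. active P u p}"

end

theory Submission
  imports Defs
begin

text \<open>A vertex of the convex hull of a set cannot lie strictly inside a triangle spanned by
  points of that set. Applied to u and the triangle t u v this gives p \<noteq> u, so the triangle
  t p v is spanned by points of P - {u}; applied to q and that triangle, q is not a vertex of
  the hull of P - {u}.\<close>

lemma extreme_point_not_in_interior_hull_subset:
  fixes S T :: "'a::{real_normed_vector, perfect_space} set"
  assumes "x extreme_point_of (convex hull S)" and "T \<subseteq> S"
  shows "x \<notin> interior (convex hull T)"
proof -
  have "interior (convex hull T) \<subseteq> interior (convex hull S)"
    using assms(2) by (intro interior_mono hull_mono)
  with extreme_point_not_in_interior[OF assms(1)] show ?thesis by blast
qed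

lemma consecutive_cw_extreme_points:
  assumes "consecutive_cw P t u v"
  shows "u extreme_point_of (convex hull P)" and "t \<in> P" and "u \<in> P" and "v \<in> P"
    and "t \<noteq> u" and "v \<noteq> u"
proof -
  have "t extreme_point_of (convex hull P)" "u extreme_point_of (convex hull P)"
    "v extreme_point_of (convex hull P)"
    using assms by (simp_all add: consecutive_cw_def cw_hull_edge_def layer_def hull_vertices_def)
  then show "u extreme_point_of (convex hull P)" "t \<in> P" "u \<in> P" "v \<in> P"
    using extreme_point_of_convex_hull by blast+
  show "t \<noteq> u" "v \<noteq> u"
    using assms by (auto simp: consecutive_cw_def cw_hull_edge_def)
qed

lemma active_imp_extreme_point_of_hull_delete:
  assumes "q \<in> active_set P u"
  shows "q extreme_point_of (convex hull (P - {u}))"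
  using assms by (simp add: active_set_def active_def layer_def hull_vertices_def)

theorem lemma1:
  fixes P :: "point set" and t u v p q :: point
  assumes "finite P"
    and "general_position P"
    and "consecutive_cw P t u v"
    and "p \<in> P" and "q \<in> P" and "p \<noteq> q"
    and "p \<in> interior (convex hull {t, u, v})"
    and "q \<in> interior (convex hull {t, p, v})"
  shows "q \<notin> active_set P u"
proof
  assume "q \<in> active_set P u"
  then have q_vertex: "q extreme_point_of (convex hull (P - {u}))"
    by (rule active_imp_extreme_point_of_hull_delete)
  note tuv = consecutive_cw_extreme_points[OF assms(3)]
  have "u \<notin> interior (convex hull {t, u, v})"
    using tuv by (intro extreme_point_not_in_interior_hull_subset) auto
  with assms(7) have "p \<noteq> u" by blast
  then have "{t, p, v} \<subseteq> P - {u}"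
    using tuv assms(4) by auto
  with q_vertex have "q \<notin> interior (convex hull {t, p, v})"
    by (rule extreme_point_not_in_interior_hull_subset)
  with assms(8) show False by contradiction
qed

end
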